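(* Let $f:\{0,1\}^r\to\{0,1\}$ satisfy $f(0,\dots,0)=1$, and suppose $f$ does not contain $\mathrm{IMPL}$ as a $0$-restriction. If $S\subseteq T\subseteq[r]$ and $f(a_S)=f(a_T)=1$, then $f(a_{T\setminus S})=1$.
   Context: For $S\subseteq[r]$, $a_S\in\{0,1\}^r$ is the vector with ones exactly at the positions in $S$. $f$ contains $g:\{0,1\}^s\to\{0,1\}$ as a $0$-restriction if there are pairwise disjoint, possibly empty, sets $X_1,\dots,X_s,Z_0$ with union $[r]$ such that $g(x_1,\dots,x_s)=f(u)$, where $u_i=x_j$ for $i\in X_j$ and $u_i=0$ for $i\in Z_0$. $\mathrm{IMPL}(y_1,y_2)=\overline{y_1}\vee y_2$. *)

theory Defs
  imports Main
begin

(* Boolean functions {0,1}^r -> {0,1} are modelled as functions on bool lists;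
   only lists of length r are relevant. Coordinates are indexed 0..r-1, so [r] = {0..<r}. *)

definition charvec :: "nat \<Rightarrow> nat set \<Rightarrow> bool list" where
  "charvec r S = map (\<lambda>i. i \<in> S) [0..<r]"

definition IMPL :: "bool list \<Rightarrow> bool" where
  "IMPL y = (\<not> y ! 0 \<or> y ! 1)"

definition contains_0restr ::
  "nat \<Rightarrow> (bool list \<Rightarrow> bool) \<Rightarrow> nat \<Rightarrow> (bool list \<Rightarrow> bool) \<Rightarrow> bool" where
  "contains_0restr r f s g \<longleftrightarrow>
     (\<exists>(X :: nat \<Rightarrow> nat set) (Z0 :: nat set).
        (\<forall>j<s. \<forall>k<s. j \<noteq> k \<longrightarrow> X j \<inter> X k = {}) \<and>
        (\<forall>j<s. X j \<inter> Z0 = {}) \<and>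
        (\<Union>j<s. X j) \<union> Z0 = {0..<r} \<and>
        (\<forall>x. length x = s \<longrightarrow>
           (\<forall>u. length u = r \<longrightarrow>
              (\<forall>j<s. \<forall>i\<in>X j. u ! i = x ! j) \<longrightarrow>
              (\<forall>i\<in>Z0. u ! i = False) \<longrightarrow>
              g x = f u)))"

end

theory Submission
  imports Defs
begin

(* If f(a_{T-S}) = 0, then placing y_1 on T - S, y_2 on S and 0 elsewhere turns f into
   IMPL(y_1, y_2): the four inputs give a_T, a_{T-S}, a_S and the zero vector. *)

lemma charvec_empty: "charvec r {} = replicate r False"
  by (simp add: charvec_def map_replicate_const)

lemma charvec_eq_iff_nth:
  assumes "length u = r"
  shows "u = charvec r A \<longleftrightarrow> (\<forall>i<r. u ! i \<longleftrightarrow> i \<in> A)"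
  using assms by (auto simp: charvec_def list_eq_iff_nth_eq)

lemma contains_0restrI:
  assumes disjoint: "\<And>j k. j < s \<Longrightarrow> k < s \<Longrightarrow> j \<noteq> k \<Longrightarrow> X j \<inter> X k = {}"
    and blocks: "\<And>j. j < s \<Longrightarrow> X j \<subseteq> {0..<r}"
    and restriction: "\<And>x. length x = s \<Longrightarrow> g x = f (charvec r (\<Union>j\<in>{j. j < s \<and> x ! j}. X j))"
  shows "contains_0restr r f s g"
  unfolding contains_0restr_def
proof (intro exI[of _ X] exI[of _ "{0..<r} - (\<Union>j<s. X j)"] conjI allI impI)
  show "X j \<inter> X k = {}" if "j < s" "k < s" "j \<noteq> k" for j k
    using disjoint that .
  show "X j \<inter> ({0..<r} - (\<Union>j<s. X j)) = {}" if "j < s" for j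
    using that by blast
  show "(\<Union>j<s. X j) \<union> ({0..<r} - (\<Union>j<s. X j)) = {0..<r}"
    using blocks by blast
  fix x u :: "bool list"
  assume "length x = s" "length u = r"
    and on_blocks: "\<forall>j<s. \<forall>i\<in>X j. u ! i = x ! j"
    and on_zeros: "\<forall>i\<in>{0..<r} - (\<Union>j<s. X j). u ! i = False"
  have "u ! i \<longleftrightarrow> i \<in> (\<Union>j\<in>{j. j < s \<and> x ! j}. X j)" if "i < r" for i
  proof (cases "\<exists>j<s. i \<in> X j")
    case True
    then obtain j where j: "j < s" "i \<in> X j" by blast
    have "k = j" if "k < s" "i \<in> X k" for k
      using disjoint[of k j] that j by blast
    then have "i \<in> (\<Union>j\<in>{j. j < s \<and> x ! j}. X j) \<longleftrightarrow> x ! j"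
      using j by blast
    then show ?thesis using on_blocks j by simp
  next
    case False
    then show ?thesis using on_zeros \<open>i < r\<close> by auto
  qed
  then have "u = charvec r (\<Union>j\<in>{j. j < s \<and> x ! j}. X j)"
    using charvec_eq_iff_nth[OF \<open>length u = r\<close>] by blast
  then show "g x = f u"
    using restriction[OF \<open>length x = s\<close>] by simp
qed

theorem mainTheorem15:
  fixes r :: nat and f :: "bool list \<Rightarrow> bool" and S T :: "nat set"
  assumes "f (replicate r False)"
    and "\<not> contains_0restr r f 2 IMPL"
    and "S \<subseteq> T" and "T \<subseteq> {0..<r}"
    and "f (charvec r S)" and "f (charvec r T)"
  shows "f (charvec r (T - S))"
proof (rule ccontr)
  assume "\<not> f (charvec r (T - S))"
  define X where "X j = (if j = 0 then T - S else S)" for j :: nat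
  have "X j \<inter> X k = {}" if "j < 2" "k < 2" "j \<noteq> k" for j k
    using that by (auto simp: X_def less_2_cases_iff)
  moreover have "X j \<subseteq> {0..<r}" if "j < 2" for j
    using \<open>S \<subseteq> T\<close> \<open>T \<subseteq> {0..<r}\<close> by (auto simp: X_def)
  moreover have "IMPL x = f (charvec r (\<Union>j\<in>{j. j < 2 \<and> x ! j}. X j))" if "length x = 2" for x
  proof -
    have "{j. j < 2 \<and> x ! j} = {j. j = 0 \<and> x ! 0} \<union> {j. j = 1 \<and> x ! 1}"
      by (auto simp: less_2_cases_iff)
    then have "(\<Union>j\<in>{j. j < 2 \<and> x ! j}. X j) =
        (if x ! 0 then T - S else {}) \<union> (if x ! 1 then S else {})"
      by (auto simp: X_def)
    also have "\<dots> = (if x ! 1 then (if x ! 0 then T else S) else if x ! 0 then T - S else {})"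
      using \<open>S \<subseteq> T\<close> by auto
    finally show ?thesis
      using assms(1,5,6) \<open>\<not> f (charvec r (T - S))\<close> by (simp add: IMPL_def charvec_empty)
  qed
  ultimately have "contains_0restr r f 2 IMPL"
    by (rule contains_0restrI)
  with assms(2) show False ..
qed

end
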